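(* For any $n\in\mathbb{N}$, $d\in\mathbb{N}_0$, $c_1,\ldots,c_d\in\mathbb{N}\setminus\{2\}$ and $a_0,\ldots,a_d\in\mathbb{N}_0$, with $c_0=1$, $c_{d+1}=0$, $\delta_i=\delta(c_i)+\delta(c_{i+1})$, $k_{-1}=0$, $$t^{\star}_n(\{2\}^{a_0},c_1,\{2\}^{a_1},\ldots,c_d,\{2\}^{a_d})=\frac{n\binom{2n}{n}}{2^{4n-2}}\sum_{n\geq k_0\geq\cdots\geq k_d\geq1}\binom{2n-1}{n-k_0}\prod_{i=0}^{d}\frac{(-1)^{k_i\delta_i}}{(2k_i-1)^{2a_i-\delta_i+3}}V_{k_{i-1},k_i}^{\#}(\{1\}^{c_i-3}).$$
   Context: $t^{\star}_n(\boldsymbol{s})=\sum_{n\geq k_1\geq\cdots\geq k_r\geq1}\prod_{j=1}^r(2k_j-1)^{-s_j}$ for an index $\boldsymbol{s}=(s_1,\ldots,s_r)$, $t^\star_n(\emptyset)=1$. $\{s\}^a$ denotes $s$ repeated $a$ times; for $a\le 0$, $\{1\}^{a}$ is the empty index. $\triangle(k,m)=0$ if $k=m$, $1$ otherwise. For an index $\boldsymbol{s}=(s_1,\ldots,s_r)$ and $k,m\in\mathbb{N}_0$: if $\boldsymbol{s}\ne\emptyset$ and $k\ge m$, $V^{\#}_{k,m}(\boldsymbol{s})=\frac{2k-1}{2m-1}\sum_{k\geq l_1\geq\cdots\geq l_r\geq m}\frac{2^{\triangle(k,l_1)+\triangle(l_1,l_2)+\cdots+\triangle(l_r,m)}}{(2l_1-1)^{s_1}\cdots(2l_r-1)^{s_r}}$;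 otherwise $V^{\#}_{k,m}(\boldsymbol{s})=\left(2\cdot\frac{2k-1}{2m-1}\right)^{\triangle(k,m)}$. $\delta(0)=2$, $\delta(1)=1$, $\delta(c)=0$ for $c\ge3$. *)

theory Defs
  imports Complex_Main
begin

text \<open>Odd number 2k-1 as a real (for k = 0 this is -1).\<close>
definition odd_r :: "nat \<Rightarrow> real" where
  "odd_r k = 2 * real k - 1"

fun tstar :: "nat \<Rightarrow> nat list \<Rightarrow> real" where
  "tstar n [] = 1"
| "tstar n (s # ss) = (\<Sum>k\<in>{1..n}. tstar k ss / odd_r k ^ s)"

definition tri :: "nat \<Rightarrow> nat \<Rightarrow> nat" where
  "tri k m = (if k = m then 0 else 1)"

text \<open>Wsum k m s = sum over k >= l_1 >= ... >= l_r >= m of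
  2^(tri k l_1 + tri l_1 l_2 + ... + tri l_r m) / prod (2 l_j - 1)^(s_j).\<close>
fun Wsum :: "nat \<Rightarrow> nat \<Rightarrow> nat list \<Rightarrow> real" where
  "Wsum k m [] = 2 ^ tri k m"
| "Wsum k m (s # ss) = (\<Sum>l\<in>{m..k}. 2 ^ tri k l / odd_r l ^ s * Wsum l m ss)"

definition Vsharp :: "nat \<Rightarrow> nat \<Rightarrow> nat list \<Rightarrow> real" where
  "Vsharp k m s =
     (if s \<noteq> [] \<and> k \<ge> m then odd_r k / odd_r m * Wsum k m s
      else (2 * (odd_r k / odd_r m)) ^ tri k m)"

text \<open>delta(0)=2, delta(1)=1, delta(c)=0 for c >= 3 (value at 2 is never used).\<close>
definition delta :: "nat \<Rightarrow> nat" where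
  "delta c = (if c = 0 then 2 else if c = 1 then 1 else 0)"

text \<open>The index {2}^{a_0}, c_1, {2}^{a_1}, ..., c_d, {2}^{a_d}.\<close>
definition mix_index :: "nat \<Rightarrow> (nat \<Rightarrow> nat) \<Rightarrow> (nat \<Rightarrow> nat) \<Rightarrow> nat list" where
  "mix_index d c a = replicate (a 0) 2 @ concat (map (\<lambda>i. c i # replicate (a i) 2) [1..<d+1])"

definition cext :: "nat \<Rightarrow> (nat \<Rightarrow> nat) \<Rightarrow> nat \<Rightarrow> nat" where
  "cext d c i = (if i = 0 then 1 else if i = d + 1 then 0 else c i)"

definition deltai :: "nat \<Rightarrow> (nat \<Rightarrow> nat) \<Rightarrow> nat \<Rightarrow> nat" where
  "deltai d c i = delta (cext d c i) + delta (cext d c (i + 1))"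

definition chains :: "nat \<Rightarrow> nat \<Rightarrow> nat list set" where
  "chains n d = {ks. length ks = d + 1 \<and> sorted_wrt (\<ge>) ks \<and> set ks \<subseteq> {1..n}}"

end

theory Submission
  imports Defs
begin

text \<open>
  Write P n k = n binom(2n,n) binom(2n-1,n-k) / 2^(4n-2) for 1 \<le> k \<le> n (this is \<open>kern\<close>).
  Every t*_n considered equals \<Sum>_k P n k g(k) for a coefficient function g independent of n;
  for the empty index g(k) = 2(-1)^(k+1)/(2k-1). The recurrence
  (2n+1)^2 P n k = ((2n+1)^2 - (2k-1)^2) P (n+1) k turns identities between partial sums over n
  into identities between coefficient functions. It yields
  \<Sum>_(m\<le>n) P m k/(2m-1)^2 = P n k/(2k-1)^2, so prepending a 2 to the index divides g(k) by
  (2k-1)^2; and dividing the summand by 2m-1 acts on coefficients by a triangular transform, so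
  prepending c = 1 or c \<ge> 3 replaces g by k \<mapsto> \<Sum>_(l\<le>k) K_c(k,l) g(l), with K_c expressed
  through V#. Unrolling along the index and expanding the nested triangular sums into one sum
  over chains n \<ge> k_0 \<ge> ... \<ge> k_d \<ge> 1 gives the formula.
\<close>

lemma binomial_absorb_comp_Suc: "(n - k) * (n choose k) = Suc k * (n choose Suc k)"
  using binomial_absorb_comp[of n k] times_binomial_minus1_eq[of "Suc k" n] by simp

lemma central_binomial_Suc: "(m + 1) * (2*m + 2 choose (m + 1)) = 2 * (2*m + 1) * (2*m choose m)"
proof -
  have "(m + 1) * (2*m + 2 choose (m + 1)) = (2*m + 2) * (2*m + 1 choose m)"
    using Suc_times_binomial[of m "2*m + 1"] by simp
  also have "(2*m + 1 choose m) = (2*m + 1 choose (m + 1))"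
    using binomial_symmetric[of m "2*m + 1"] by simp
  also have "(2*m + 2) * (2*m + 1 choose (m + 1)) = 2 * ((m + 1) * (2*m + 1 choose (m + 1)))"
    by simp
  also have "(m + 1) * (2*m + 1 choose (m + 1)) = (2*m + 1) * (2*m choose m)"
    using Suc_times_binomial_eq[of "2*m" m] by simp
  finally show ?thesis by simp
qed

lemma binomial_absorb_both:
  assumes "0 < j"
  shows "j * (n - j) * (n choose j) = n * (n - 1) * (n - 2 choose (j - 1))"
proof -
  have "j * (n - j) * (n choose j) = (n - j) * (n * (n - 1 choose (j - 1)))"
    using times_binomial_minus1_eq[OF assms, of n] by simp
  also have "\<dots> = n * (((n - 1) - (j - 1)) * (n - 1 choose (j - 1)))"
    using assms by (simp add: ac_simps)
  also have "\<dots> = n * ((n - 1) * (n - 1 - 1 choose (j - 1)))"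
    by (simp only: binomial_absorb_comp)
  also have "\<dots> = n * (n - 1) * (n - 2 choose (j - 1))"
    by (simp add: diff_diff_left numeral_2_eq_2)
  finally show ?thesis .
qed

lemma odd_r_nonzero: "1 \<le> k \<Longrightarrow> odd_r k \<noteq> 0"
  by (simp add: odd_r_def)

lemma neg_one_power_mult_self: "(-1::'a::ring_1) ^ i * (-1) ^ i = 1"
  by (simp add: power_add[symmetric])

definition kern_scale :: "nat \<Rightarrow> real" where
  "kern_scale n = real n * real (2*n choose n) / 2 ^ (4*n - 2)"

definition kern :: "nat \<Rightarrow> nat \<Rightarrow> real" where
  "kern n k = (if 1 \<le> k \<and> k \<le> n then kern_scale n * real (2*n - 1 choose (n - k)) else 0)"

definition kern_sum :: "nat \<Rightarrow> (nat \<Rightarrow> real) \<Rightarrow> real" where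
  "kern_sum n g = (\<Sum>k=1..n. kern n k * g k)"

lemma kern_eq_0: "k = 0 \<or> n < k \<Longrightarrow> kern n k = 0"
  by (auto simp: kern_def)

lemma kern_sum_cong:
  "(\<And>k. 1 \<le> k \<Longrightarrow> k \<le> n \<Longrightarrow> f k = g k) \<Longrightarrow> kern_sum n f = kern_sum n g"
  unfolding kern_sum_def by (intro sum.cong) auto

lemma kern_sum_upto: "n \<le> N \<Longrightarrow> kern_sum n g = (\<Sum>k=1..N. kern n k * g k)"
  unfolding kern_sum_def by (rule sum.mono_neutral_left) (auto simp: kern_eq_0)

lemma kern_sum_indicator: "1 \<le> l \<Longrightarrow> kern_sum n (\<lambda>k. if k = l then x else 0) = kern n l * x"
  unfolding kern_sum_def by (cases "l \<le> n") (auto simp: kern_eq_0 if_distrib cong: if_cong)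

lemma kern_Suc:
  assumes k: "1 \<le> k"
  shows "kern (Suc m) k * (odd_r (Suc m)^2 - odd_r k^2) = odd_r (Suc m)^2 * kern m k"
proof (cases "k \<le> m")
  case False
  then show ?thesis
    by (cases "k = Suc m") (auto simp: kern_def)
next
  case True
  define j where "j = m + 1 - k"
  have j: "1 \<le> j" "m - k = j - 1" "Suc m - k = j"
    using True k by (auto simp: j_def)
  have m: "m \<ge> 1"
    using True k by simp
  define C1 where "C1 = real (2*m + 2 choose (m + 1))"
  define C0 where "C0 = real (2*m choose m)"
  define D1 where "D1 = real (2*m + 1 choose j)"
  define D0 where "D0 = real (2*m - 1 choose (j - 1))"
  have odd_diff: "odd_r (Suc m)^2 - odd_r k^2 = 4 * real j * real (2*m + 1 - j)"
    using True k by (simp add: odd_r_def j_def power2_eq_square of_nat_diff algebra_simps)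
  have central: "(real m + 1) * C1 = 2 * (2 * real m + 1) * C0"
    unfolding C1_def C0_def using central_binomial_Suc[of m, THEN arg_cong[where f = real]]
    by (simp only: of_nat_mult of_nat_add of_nat_1 of_nat_numeral)
  have "j * (2*m + 1 - j) * (2*m + 1 choose j) = (2*m + 1) * (2*m) * (2*m - 1 choose (j - 1))"
    using binomial_absorb_both[of j "2*m + 1"] j(1) by simp
  from arg_cong[where f = real, OF this]
  have absorb: "real j * real (2*m + 1 - j) * D1 = (2 * real m + 1) * (2 * real m) * D0"
    unfolding D1_def D0_def by (simp only: of_nat_mult of_nat_add of_nat_1 of_nat_numeral)
  have pow: "(2::real) ^ (4 * Suc m - 2) = 16 * 2 ^ (4*m - 2)"
  proof -
    have "4 * Suc m - 2 = (4*m - 2) + 4"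
      using m by simp
    then have "(2::real) ^ (4 * Suc m - 2) = 2 ^ (4*m - 2) * 2 ^ 4"
      by (simp only: power_add)
    then show ?thesis
      by simp
  qed
  have kern_Suc_m: "kern (Suc m) k = (real m + 1) * C1 / 2 ^ (4 * Suc m - 2) * D1"
    using True k j(3) by (simp add: kern_def kern_scale_def C1_def D1_def)
  have kern_m: "kern m k = real m * C0 / 2 ^ (4*m - 2) * D0"
    using True k j(2) by (simp add: kern_def kern_scale_def C0_def D0_def)
  have "kern (Suc m) k * (odd_r (Suc m)^2 - odd_r k^2)
      = ((real m + 1) * C1) * (real j * real (2*m + 1 - j) * D1) * 4 / 2 ^ (4 * Suc m - 2)"
    unfolding kern_Suc_m odd_diff by (simp add: field_simps)
  also have "\<dots> = (2 * (2 * real m + 1) * C0) * ((2 * real m + 1) * (2 * real m) * D0) * 4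
                   / (16 * 2 ^ (4*m - 2))"
    unfolding central absorb pow ..
  also have "\<dots> = odd_r (Suc m)^2 * kern m k"
    unfolding kern_m by (simp add: odd_r_def field_simps power2_eq_square)
  finally show ?thesis .
qed

lemma kern_sum_Suc_diff:
  "kern_sum (Suc n) g - kern_sum n g
     = (\<Sum>k=1..Suc n. kern (Suc n) k * g k * odd_r k^2) / odd_r (Suc n)^2"
proof -
  have nz: "odd_r (Suc n)^2 \<noteq> 0"
    using odd_r_nonzero[of "Suc n"] by simp
  have "kern n k * g k = kern (Suc n) k * g k - kern (Suc n) k * g k * odd_r k^2 / odd_r (Suc n)^2"
    if "1 \<le> k" for k
    using kern_Suc[OF that, of n] nz by (simp add: field_simps)
  then have "kern_sum n g
      = (\<Sum>k=1..Suc n. kern (Suc n) k * g k - kern (Suc n) k * g k * odd_r k^2 / odd_r (Suc n)^2)"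
    unfolding kern_sum_upto[OF le_SucI[OF order_refl]] by (intro sum.cong) auto
  then have "kern_sum (Suc n) g - kern_sum n g
      = (\<Sum>k=1..Suc n. kern (Suc n) k * g k * odd_r k^2 / odd_r (Suc n)^2)"
    by (simp only: kern_sum_def[of "Suc n"] sum_subtractf)
  then show ?thesis
    by (simp only: sum_divide_distrib)
qed

lemma partial_sum_eq_kern_sum:
  assumes "\<And>n. h (Suc n) = (\<Sum>k=1..Suc n. kern (Suc n) k * g k * odd_r k^2) / odd_r (Suc n)^2"
  shows "(\<Sum>m=1..n. h m) = kern_sum n g"
proof (induction n)
  case 0
  then show ?case
    by (simp add: kern_sum_def)
next
  case (Suc n)
  then have "(\<Sum>m=1..Suc n. h m) = kern_sum n g + h (Suc n)"
    by simp
  also have "\<dots> = kern_sum (Suc n) g"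
    using kern_sum_Suc_diff[of n g] assms[of n] by simp
  finally show ?case .
qed

lemma odd_weighted_binomial_tail:
  assumes "i \<le> n"
  shows "real (n - i) * real (2*n - 1 choose (n - i))
           = (\<Sum>j=Suc i..n. odd_r j * real (2*n - 1 choose (n - j)))"
  using assms
proof (induction i rule: inc_induct)
  case base
  then show ?case
    by simp
next
  case (step i)
  define t where "t = n - Suc i"
  have t: "n - i = Suc t" "odd_r (Suc i) + real t = real (2*n - 1 - t)"
    using step.hyps by (auto simp: t_def odd_r_def)
  have "(\<Sum>j=Suc i..n. odd_r j * real (2*n - 1 choose (n - j)))
      = odd_r (Suc i) * real (2*n - 1 choose t) + real t * real (2*n - 1 choose t)"
    using step by (simp add: sum.atLeast_Suc_atMost t_def)
  also have "\<dots> = real (2*n - 1 - t) * real (2*n - 1 choose t)"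
    by (simp only: t(2)[symmetric] distrib_right)
  also have "\<dots> = real (Suc t) * real (2*n - 1 choose Suc t)"
    by (simp only: of_nat_mult[symmetric] binomial_absorb_comp_Suc)
  also have "\<dots> = real (n - i) * real (2*n - 1 choose (n - i))"
    unfolding t(1) ..
  finally show ?case ..
qed

lemma kern_tail_sum:
  assumes "1 \<le> i" "i \<le> n"
  shows "(odd_r n - odd_r i) * kern n i = 2 * (\<Sum>j=Suc i..n. odd_r j * kern n j)"
proof -
  have "(\<Sum>j=Suc i..n. odd_r j * kern n j)
      = kern_scale n * (\<Sum>j=Suc i..n. odd_r j * real (2*n - 1 choose (n - j)))"
    unfolding sum_distrib_left using assms by (intro sum.cong) (auto simp: kern_def)
  also have "\<dots> = kern_scale n * (real (n - i) * real (2*n - 1 choose (n - i)))"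
    using odd_weighted_binomial_tail[OF assms(2)] by simp
  finally show ?thesis
    using assms by (simp add: kern_def odd_r_def of_nat_diff)
qed

lemma sum_triangle_swap:
  fixes h :: "nat \<Rightarrow> nat \<Rightarrow> 'a::comm_monoid_add"
  shows "(\<Sum>j=1..n. \<Sum>i=1..<j. h i j) = (\<Sum>i=1..n. \<Sum>j=Suc i..n. h i j)"
proof (induction n)
  case 0
  then show ?case
    by simp
next
  case (Suc n)
  have "(\<Sum>i=1..Suc n. \<Sum>j=Suc i..Suc n. h i j) = (\<Sum>i=1..n. (\<Sum>j=Suc i..n. h i j) + h i (Suc n))"
    by (auto simp: sum.cl_ivl_Suc intro!: sum.cong)
  also have "\<dots> = (\<Sum>i=1..n. \<Sum>j=Suc i..n. h i j) + (\<Sum>i=1..<Suc n. h i (Suc n))"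
    by (simp add: sum.distrib atLeastLessThanSuc_atLeastAtMost)
  finally show ?case
    using Suc by (simp add: sum.cl_ivl_Suc)
qed

lemma odd_mult_kern_sum:
  "odd_r n * kern_sum n g = (\<Sum>j=1..n. kern n j * odd_r j * (g j + 2 * (\<Sum>i=1..<j. g i)))"
proof -
  have "(\<Sum>j=1..n. kern n j * odd_r j * (g j + 2 * (\<Sum>i=1..<j. g i)))
      = (\<Sum>j=1..n. kern n j * odd_r j * g j) + 2 * (\<Sum>j=1..n. \<Sum>i=1..<j. kern n j * odd_r j * g i)"
    by (simp add: sum.distrib sum_distrib_left algebra_simps)
  also have "(\<Sum>j=1..n. \<Sum>i=1..<j. kern n j * odd_r j * g i)
      = (\<Sum>i=1..n. \<Sum>j=Suc i..n. kern n j * odd_r j * g i)"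
    by (rule sum_triangle_swap)
  also have "\<dots> = (\<Sum>i=1..n. g i * (\<Sum>j=Suc i..n. odd_r j * kern n j))"
    by (simp add: sum_distrib_left mult_ac)
  also have "\<dots> = (\<Sum>i=1..n. g i * ((odd_r n - odd_r i) * kern n i / 2))"
    by (intro sum.cong) (auto simp: kern_tail_sum)
  also have "(\<Sum>j=1..n. kern n j * odd_r j * g j) + 2 * \<dots> = (\<Sum>j=1..n. odd_r n * (kern n j * g j))"
    by (simp add: sum_distrib_left sum.distrib[symmetric]) (simp add: algebra_simps)
  finally show ?thesis
    by (simp add: kern_sum_def sum_distrib_left)
qed

definition alt_odd_sum :: "(nat \<Rightarrow> real) \<Rightarrow> nat \<Rightarrow> real" where
  "alt_odd_sum f j = (\<Sum>l=1..j. (-1)^(j + l) * 2 ^ tri j l * odd_r l * f l)"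

lemma alt_odd_sum_eq:
  assumes "1 \<le> j"
  shows "alt_odd_sum f j = odd_r j * f j + (\<Sum>l=1..<j. (-1)^(j + l) * 2 * odd_r l * f l)"
proof -
  have "alt_odd_sum f j = (\<Sum>l=1..<j. (-1)^(j + l) * 2 ^ tri j l * odd_r l * f l) + odd_r j * f j"
    using assms by (simp add: alt_odd_sum_def atLeastLessThanSuc_atLeastAtMost[symmetric]
        sum.atLeastLessThan_Suc tri_def)
  also have "(\<Sum>l=1..<j. (-1)^(j + l) * 2 ^ tri j l * odd_r l * f l)
      = (\<Sum>l=1..<j. (-1)^(j + l) * 2 * odd_r l * f l)"
    by (intro sum.cong) (auto simp: tri_def)
  finally show ?thesis
    by simp
qed

lemma alt_odd_sum_prefix:
  "1 \<le> j \<Longrightarrow> alt_odd_sum f j + 2 * (\<Sum>i=1..<j. alt_odd_sum f i) = odd_r j * f j"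
proof (induction j rule: nat_induct_at_least)
  case base
  then show ?case
    by (simp add: alt_odd_sum_def tri_def)
next
  case (Suc j)
  have signs: "(\<Sum>l=1..<Suc j. (-1)^(Suc j + l) * 2 * odd_r l * f l)
      = - (\<Sum>l=1..<j. (-1)^(j + l) * 2 * odd_r l * f l) - 2 * odd_r j * f j"
    using Suc.hyps by (simp add: sum.atLeastLessThan_Suc sum_negf[symmetric])
  have "alt_odd_sum f (Suc j) + 2 * (\<Sum>i=1..<Suc j. alt_odd_sum f i)
      = alt_odd_sum f (Suc j) + alt_odd_sum f j + (alt_odd_sum f j + 2 * (\<Sum>i=1..<j. alt_odd_sum f i))"
    using Suc.hyps by (simp add: sum.atLeastLessThan_Suc)
  also have "\<dots> = alt_odd_sum f (Suc j) + alt_odd_sum f j + odd_r j * f j"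
    using Suc.IH by simp
  also have "\<dots> = odd_r (Suc j) * f (Suc j)"
    using alt_odd_sum_eq[OF Suc.hyps] alt_odd_sum_eq[of "Suc j"] signs by simp
  finally show ?case .
qed

definition div_odd_coeff :: "(nat \<Rightarrow> real) \<Rightarrow> nat \<Rightarrow> real" where
  "div_odd_coeff f j = alt_odd_sum f j / odd_r j^2"

lemma div_odd_coeff_indicator:
  "1 \<le> l \<Longrightarrow> div_odd_coeff (\<lambda>i. if i = l then x else 0) j
     = (if l \<le> j then (-1)^(j + l) * 2 ^ tri j l * odd_r l * x / odd_r j^2 else 0)"
  unfolding div_odd_coeff_def alt_odd_sum_def by (auto simp: if_distrib cong: if_cong)

lemma partial_sum_div_odd:
  assumes h: "\<And>n. (\<Sum>m=1..n. h m) = kern_sum n f"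
  shows "(\<Sum>m=1..n. h m / odd_r m) = kern_sum n (div_odd_coeff f)"
proof (rule partial_sum_eq_kern_sum)
  fix n
  define N where "N = Suc n"
  have nz: "odd_r N \<noteq> 0"
    using odd_r_nonzero[of N] by (simp add: N_def)
  have "h N = kern_sum N f - kern_sum n f"
    using h[of N] h[of n] by (simp add: N_def)
  also have "\<dots> = (\<Sum>j=1..N. kern N j * f j * odd_r j^2) / odd_r N^2"
    unfolding N_def by (rule kern_sum_Suc_diff)
  finally have hN: "h N = (\<Sum>j=1..N. kern N j * f j * odd_r j^2) / odd_r N^2" .
  have "(\<Sum>j=1..N. kern N j * div_odd_coeff f j * odd_r j^2) = kern_sum N (alt_odd_sum f)"
    unfolding kern_sum_def div_odd_coeff_def using odd_r_nonzero by (intro sum.cong) auto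
  then have "odd_r N * (\<Sum>j=1..N. kern N j * div_odd_coeff f j * odd_r j^2)
      = odd_r N * kern_sum N (alt_odd_sum f)"
    by simp
  also have "\<dots> = (\<Sum>j=1..N. kern N j * odd_r j * (odd_r j * f j))"
    unfolding odd_mult_kern_sum by (intro sum.cong refl) (metis alt_odd_sum_prefix atLeastAtMost_iff)
  also have "\<dots> = (\<Sum>j=1..N. kern N j * f j * odd_r j^2)"
    by (simp add: power2_eq_square mult_ac)
  finally have "odd_r N * (\<Sum>j=1..N. kern N j * div_odd_coeff f j * odd_r j^2)
      = (\<Sum>j=1..N. kern N j * f j * odd_r j^2)" .
  then show "h (Suc n) / odd_r (Suc n)
      = (\<Sum>j=1..Suc n. kern (Suc n) j * div_odd_coeff f j * odd_r j^2) / odd_r (Suc n)^2"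
    unfolding N_def[symmetric] hN using nz by (simp add: field_simps power2_eq_square)
qed

lemma sum_kern_div_odd_sq:
  assumes k: "1 \<le> k"
  shows "(\<Sum>m=1..n. kern m k / odd_r m^2) = kern n k / odd_r k^2"
proof -
  have "(\<Sum>m=1..n. kern m k / odd_r m^2) = kern_sum n (\<lambda>j. if j = k then 1 / odd_r k^2 else 0)"
  proof (rule partial_sum_eq_kern_sum)
    fix n
    have "(\<Sum>j=1..Suc n. kern (Suc n) j * (if j = k then 1 / odd_r k^2 else 0) * odd_r j^2)
        = kern_sum (Suc n) (\<lambda>j. if j = k then 1 else 0)"
      unfolding kern_sum_def using odd_r_nonzero[OF k] by (intro sum.cong) auto
    then show "kern (Suc n) k / odd_r (Suc n)^2
        = (\<Sum>j=1..Suc n. kern (Suc n) j * (if j = k then 1 / odd_r k^2 else 0) * odd_r j^2)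
          / odd_r (Suc n)^2"
      using kern_sum_indicator[OF k] by simp
  qed
  then show ?thesis
    using kern_sum_indicator[OF k] by simp
qed

definition div_kernel :: "nat \<Rightarrow> nat \<Rightarrow> nat \<Rightarrow> real" where
  "div_kernel c j l =
     (if l \<le> j then
        (if c = 1 then 2 ^ tri j l / odd_r j
         else (-1)^(j + l) / odd_r j^3 * Vsharp j l (replicate (c - 3) 1))
      else 0)"

lemma sum_kern_div_odd:
  assumes k: "1 \<le> k"
  shows "(\<Sum>m=1..n. kern m k / odd_r m) = kern_sum n (\<lambda>j. div_kernel 1 j k)"
proof (rule partial_sum_eq_kern_sum)
  fix n
  define N where "N = Suc n"
  have key: "(\<Sum>j=1..N. kern N j * div_kernel 1 j k * odd_r j^2) = odd_r N * kern N k"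
  proof (cases "k \<le> N")
    case False
    then show ?thesis
      by (auto simp: div_kernel_def kern_eq_0 intro!: sum.neutral)
  next
    case True
    have "(\<Sum>j=1..N. kern N j * div_kernel 1 j k * odd_r j^2)
        = (\<Sum>j=k..N. kern N j * div_kernel 1 j k * odd_r j^2)"
      using k by (intro sum.mono_neutral_right) (auto simp: div_kernel_def)
    also have "\<dots> = kern N k * div_kernel 1 k k * odd_r k^2
        + (\<Sum>j=Suc k..N. kern N j * div_kernel 1 j k * odd_r j^2)"
      using True by (simp add: sum.atLeast_Suc_atMost)
    also have "(\<Sum>j=Suc k..N. kern N j * div_kernel 1 j k * odd_r j^2)
        = 2 * (\<Sum>j=Suc k..N. odd_r j * kern N j)"
      unfolding sum_distrib_left
    proof (intro sum.cong refl)
      fix j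
      assume "j \<in> {Suc k..N}"
      then show "kern N j * div_kernel 1 j k * odd_r j^2 = 2 * (odd_r j * kern N j)"
        using k odd_r_nonzero[of j] by (simp add: div_kernel_def tri_def power2_eq_square)
    qed
    also have "\<dots> = (odd_r N - odd_r k) * kern N k"
      using kern_tail_sum[OF k True] by simp
    finally show ?thesis
      using odd_r_nonzero[OF k] by (simp add: div_kernel_def tri_def power2_eq_square algebra_simps)
  qed
  show "kern (Suc n) k / odd_r (Suc n)
      = (\<Sum>j=1..Suc n. kern (Suc n) j * div_kernel 1 j k * odd_r j^2) / odd_r (Suc n)^2"
    unfolding N_def[symmetric] key using odd_r_nonzero[of N] by (simp add: N_def power2_eq_square)
qed

lemma Vsharp_eq_Wsum: "l \<le> i \<Longrightarrow> 1 \<le> l \<Longrightarrow> Vsharp i l s = odd_r i / odd_r l * Wsum i l s"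
  using odd_r_nonzero[of l] by (cases s) (auto simp: Vsharp_def tri_def)

lemma Vsharp_Cons_1:
  assumes "l \<le> j" "1 \<le> l"
  shows "Vsharp j l (1 # s) = (\<Sum>i=l..j. 2 ^ tri j i * odd_r j / odd_r i^2 * Vsharp i l s)"
proof -
  have "Vsharp j l (1 # s) = odd_r j / odd_r l * (\<Sum>i=l..j. 2 ^ tri j i / odd_r i * Wsum i l s)"
    using assms by (simp add: Vsharp_def)
  also have "\<dots> = (\<Sum>i=l..j. 2 ^ tri j i * odd_r j / odd_r i^2 * Vsharp i l s)"
    unfolding sum_distrib_left
  proof (intro sum.cong refl)
    fix i
    assume "i \<in> {l..j}"
    then have "l \<le> i" "1 \<le> i"
      using assms by auto
    then show "odd_r j / odd_r l * (2 ^ tri j i / odd_r i * Wsum i l s)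
        = 2 ^ tri j i * odd_r j / odd_r i^2 * Vsharp i l s"
      using Vsharp_eq_Wsum[of l i s] assms odd_r_nonzero[of i] by (simp add: power2_eq_square field_simps)
  qed
  finally show ?thesis .
qed

lemma div_kernel_3:
  assumes "1 \<le> l"
  shows "div_kernel 3 j l = div_odd_coeff (\<lambda>i. if i = l then 1 / odd_r l^2 else 0) j"
  unfolding div_odd_coeff_indicator[OF assms] using odd_r_nonzero[OF assms]
  by (auto simp: div_kernel_def Vsharp_def tri_def power2_eq_square power3_eq_cube field_simps)

lemma div_kernel_Suc:
  assumes c: "3 \<le> c" and l: "1 \<le> l"
  shows "div_kernel (Suc c) j l = div_odd_coeff (\<lambda>i. div_kernel c i l) j"
proof (cases "l \<le> j")
  case False
  then show ?thesis
    unfolding div_odd_coeff_def alt_odd_sum_def by (auto simp: div_kernel_def intro!: sum.neutral)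
next
  case True
  have j: "1 \<le> j"
    using True l by simp
  have "alt_odd_sum (\<lambda>i. div_kernel c i l) j
      = (\<Sum>i=l..j. (-1)^(j + i) * 2 ^ tri j i * odd_r i * div_kernel c i l)"
    unfolding alt_odd_sum_def using l by (intro sum.mono_neutral_right) (auto simp: div_kernel_def)
  also have "\<dots> = (-1)^(j + l) / odd_r j
        * (\<Sum>i=l..j. 2 ^ tri j i * odd_r j / odd_r i^2 * Vsharp i l (replicate (c - 3) 1))"
    unfolding sum_distrib_left
  proof (intro sum.cong refl)
    fix i
    assume "i \<in> {l..j}"
    then have i: "1 \<le> i" "l \<le> i"
      using l by auto
    have "(-1::real)^(j + i) * (-1)^(i + l) = (-1)^(j + l) * ((-1)^i * (-1)^i)"
      by (simp add: power_add algebra_simps)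
    then have "(-1::real)^(j + i) * (-1)^(i + l) = (-1)^(j + l)"
      by (simp add: neg_one_power_mult_self)
    then show "(-1)^(j + i) * 2 ^ tri j i * odd_r i * div_kernel c i l
        = (-1)^(j + l) / odd_r j * (2 ^ tri j i * odd_r j / odd_r i^2 * Vsharp i l (replicate (c - 3) 1))"
      using c i odd_r_nonzero[of i] odd_r_nonzero[OF j]
      by (simp add: div_kernel_def power2_eq_square power3_eq_cube field_simps)
  qed
  also have "\<dots> = (-1)^(j + l) / odd_r j * Vsharp j l (1 # replicate (c - 3) 1)"
    unfolding Vsharp_Cons_1[OF True l] ..
  also have "1 # replicate (c - 3) 1 = replicate (Suc c - 3) (1::nat)"
    using c by (metis Suc_diff_le replicate_Suc)
  finally show ?thesis
    using True c odd_r_nonzero[OF j]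
    by (simp add: div_odd_coeff_def div_kernel_def power2_eq_square power3_eq_cube)
qed

lemma sum_kern_div_odd_power:
  assumes c: "1 \<le> c" "c \<noteq> 2" and k: "1 \<le> k"
  shows "(\<Sum>m=1..n. kern m k / odd_r m^c) = kern_sum n (\<lambda>j. div_kernel c j k)"
proof (cases "c = 1")
  case True
  then show ?thesis
    using sum_kern_div_odd[OF k] by simp
next
  case False
  then have "3 \<le> c"
    using c by simp
  then show ?thesis
  proof (induction c arbitrary: n rule: nat_induct_at_least)
    case base
    have "(\<Sum>m=1..n. kern m k / odd_r m^3) = (\<Sum>m=1..n. kern m k / odd_r m^2 / odd_r m)"
      by (simp add: power2_eq_square power3_eq_cube)
    also have "\<dots> = kern_sum n (div_odd_coeff (\<lambda>i. if i = k then 1 / odd_r k^2 else 0))"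
      by (rule partial_sum_div_odd) (use sum_kern_div_odd_sq[OF k] kern_sum_indicator[OF k] in simp)
    also have "\<dots> = kern_sum n (\<lambda>j. div_kernel 3 j k)"
      by (rule kern_sum_cong) (simp add: div_kernel_3[OF k])
    finally show ?case .
  next
    case (Suc c)
    have "(\<Sum>m=1..n. kern m k / odd_r m^Suc c) = (\<Sum>m=1..n. kern m k / odd_r m^c / odd_r m)"
      by (simp add: mult.commute)
    also have "\<dots> = kern_sum n (div_odd_coeff (\<lambda>j. div_kernel c j k))"
      by (rule partial_sum_div_odd[OF Suc.IH])
    also have "\<dots> = kern_sum n (\<lambda>j. div_kernel (Suc c) j k)"
      by (rule kern_sum_cong) (simp add: div_kernel_Suc[OF Suc.hyps k])
    finally show ?case .
  qed
qed

lemma alternating_binomial_odd_sum: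
  "(real M - 1) * (\<Sum>i=0..m. (-1)^i * real (M choose i) * (real M - 2 * real i))
     = (-1)^m * (real m + 1) * (real M - 1 - 2 * real m) * real (M choose Suc m)"
proof (induction m)
  case 0
  then show ?case
    by (simp add: algebra_simps)
next
  case (Suc m)
  define X where "X = real (M choose Suc m)"
  define s where "s = ((-1::real)^m)"
  have step: "real (Suc (Suc m)) * real (M choose Suc (Suc m)) = (real M - real m - 1) * X"
  proof (cases "Suc m \<le> M")
    case True
    have "real (Suc (Suc m)) * real (M choose Suc (Suc m)) = real (M - Suc m) * X"
      unfolding X_def by (simp only: of_nat_mult[symmetric] binomial_absorb_comp_Suc)
    then show ?thesis
      using True by (simp add: of_nat_diff)
  next
    case False
    then show ?thesis
      by (simp add: X_def binomial_eq_0)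
  qed
  have "(real M - 1) * (\<Sum>i=0..Suc m. (-1)^i * real (M choose i) * (real M - 2 * real i))
      = s * (real m + 1) * (real M - 1 - 2 * real m) * X + (real M - 1) * (- s * X * (real M - 2 * real (Suc m)))"
    using Suc unfolding X_def s_def by (simp add: algebra_simps)
  also have "\<dots> = - s * (real M - 3 - 2 * real m) * ((real M - real m - 1) * X)"
    by (simp add: algebra_simps)
  also have "\<dots> = (-1)^Suc m * (real (Suc m) + 1) * (real M - 1 - 2 * real (Suc m))
                   * real (M choose Suc (Suc m))"
    unfolding step[symmetric] s_def by (simp add: algebra_simps)
  finally show ?case .
qed

lemma neg_one_power_diff:
  assumes "i \<le> N"
  shows "(-1::'a::ring_1)^(N - i) = (-1)^(N + i)"
proof -
  have "(-1::'a)^(N + i) = (-1)^((N - i) + 2 * i)"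
    using assms by (simp add: algebra_simps)
  then show ?thesis
    by (simp only: power_add power_mult) simp
qed

definition empty_coeff :: "nat \<Rightarrow> real" where
  "empty_coeff k = 2 * (-1)^(k + 1) / odd_r k"

lemma kern_empty_coeff_increment:
  assumes N: "2 \<le> N"
  shows "(\<Sum>k=1..N. kern N k * empty_coeff k * odd_r k^2) = 0"
proof -
  define M where "M = 2*N - 1"
  have RM: "real M = 2 * real N - 1"
    using N by (simp add: M_def of_nat_diff)
  have "(\<Sum>k=1..N. kern N k * empty_coeff k * odd_r k^2)
      = 2 * kern_scale N * (\<Sum>k=1..N. (-1)^(k + 1) * real (M choose (N - k)) * odd_r k)"
    unfolding sum_distrib_left
    by (intro sum.cong refl) (auto simp: kern_def empty_coeff_def M_def power2_eq_square odd_r_nonzero)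
  also have "(\<Sum>k=1..N. (-1)^(k + 1) * real (M choose (N - k)) * odd_r k)
      = (\<Sum>i=0..N-1. (-1)^(N - i + 1) * real (M choose i) * odd_r (N - i))"
    by (rule sum.reindex_bij_witness[where i="\<lambda>i. N - i" and j="\<lambda>k. N - k"]) (use N in auto)
  also have "\<dots> = (-1)^(N + 1) * (\<Sum>i=0..N-1. (-1)^i * real (M choose i) * (real M - 2 * real i))"
    unfolding sum_distrib_left
  proof (intro sum.cong refl)
    fix i
    assume "i \<in> {0..N-1}"
    then have i: "i \<le> N"
      by auto
    have "(-1::real)^(N - i + 1) = (-1)^(N + 1) * (-1)^i"
      using neg_one_power_diff[OF i] by (simp add: power_add)
    then show "(-1)^(N - i + 1) * real (M choose i) * odd_r (N - i)
        = (-1)^(N + 1) * ((-1)^i * real (M choose i) * (real M - 2 * real i))"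
      unfolding RM using i by (simp add: odd_r_def of_nat_diff algebra_simps)
  qed
  also have "(\<Sum>i=0..N-1. (-1)^i * real (M choose i) * (real M - 2 * real i)) = 0"
  proof -
    \<comment> \<open>for \<open>m = N - 1\<close> the factor \<open>M - 1 - 2m\<close> on the right vanishes\<close>
    have "(real M - 1) * (\<Sum>i=0..N-1. (-1)^i * real (M choose i) * (real M - 2 * real i)) = 0"
      unfolding alternating_binomial_odd_sum using N RM by (simp add: of_nat_diff)
    moreover have "real M - 1 \<noteq> 0"
      using N RM by simp
    ultimately show ?thesis
      by simp
  qed
  finally show ?thesis
    by simp
qed

lemma kern_sum_empty_coeff: "1 \<le> n \<Longrightarrow> kern_sum n empty_coeff = 1"
proof (induction n rule: nat_induct_at_least)
  case base
  then show ?case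
    by (simp add: kern_sum_def kern_def kern_scale_def empty_coeff_def odd_r_def)
next
  case (Suc n)
  then show ?case
    using kern_sum_Suc_diff[of n empty_coeff] kern_empty_coeff_increment[of "Suc n"] by simp
qed

lemma tstar_Cons_swap:
  assumes "\<And>m. 1 \<le> m \<Longrightarrow> tstar m s = kern_sum m g"
  shows "tstar n (c # s) = (\<Sum>j=1..n. g j * (\<Sum>k=1..n. kern k j / odd_r k^c))"
proof -
  have "tstar n (c # s) = (\<Sum>k=1..n. \<Sum>j=1..n. kern k j * g j / odd_r k^c)"
    unfolding tstar.simps sum_divide_distrib[symmetric]
    by (intro sum.cong refl) (auto simp: assms kern_sum_upto)
  also have "\<dots> = (\<Sum>j=1..n. \<Sum>k=1..n. kern k j * g j / odd_r k^c)"
    by (rule sum.swap)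
  finally show ?thesis
    by (simp add: sum_distrib_left algebra_simps)
qed

lemma tstar_Cons_2:
  assumes "\<And>m. 1 \<le> m \<Longrightarrow> tstar m s = kern_sum m g"
  shows "tstar n (2 # s) = kern_sum n (\<lambda>j. g j / odd_r j^2)"
proof -
  have "tstar n (2 # s) = (\<Sum>j=1..n. g j * (\<Sum>k=1..n. kern k j / odd_r k^2))"
    by (rule tstar_Cons_swap[OF assms])
  also have "\<dots> = kern_sum n (\<lambda>j. g j / odd_r j^2)"
    unfolding kern_sum_def by (intro sum.cong refl) (simp add: sum_kern_div_odd_sq[unfolded One_nat_def])
  finally show ?thesis .
qed

lemma tstar_replicate_2_append:
  assumes "\<And>m. 1 \<le> m \<Longrightarrow> tstar m s = kern_sum m g" and "1 \<le> n"
  shows "tstar n (replicate r 2 @ s) = kern_sum n (\<lambda>j. g j / odd_r j^(2 * r))"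
  using assms(2)
proof (induction r arbitrary: n)
  case 0
  then show ?case
    using assms(1) by simp
next
  case (Suc r)
  have "tstar n (replicate (Suc r) 2 @ s) = kern_sum n (\<lambda>j. g j / odd_r j^(2 * r) / odd_r j^2)"
    using tstar_Cons_2[OF Suc.IH] by simp
  then show ?case
    by (simp add: power_add power2_eq_square mult_ac)
qed

lemma tstar_Cons_div_kernel:
  assumes c: "1 \<le> c" "c \<noteq> 2" and "\<And>m. 1 \<le> m \<Longrightarrow> tstar m s = kern_sum m g"
  shows "tstar n (c # s) = kern_sum n (\<lambda>j. \<Sum>l=1..j. div_kernel c j l * g l)"
proof -
  have "tstar n (c # s) = (\<Sum>l=1..n. g l * (\<Sum>k=1..n. kern k l / odd_r k^c))"
    by (rule tstar_Cons_swap[OF assms(3)])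
  also have "\<dots> = (\<Sum>l=1..n. g l * kern_sum n (\<lambda>j. div_kernel c j l))"
    by (intro sum.cong refl) (simp add: sum_kern_div_odd_power[OF c, unfolded One_nat_def])
  also have "\<dots> = (\<Sum>j=1..n. kern n j * (\<Sum>l=1..n. div_kernel c j l * g l))"
    unfolding kern_sum_def sum_distrib_left by (subst sum.swap) (simp add: mult_ac)
  also have "\<dots> = kern_sum n (\<lambda>j. \<Sum>l=1..j. div_kernel c j l * g l)"
    unfolding kern_sum_def
    by (intro sum.cong refl arg_cong2[where f = times] sum.mono_neutral_right)
      (auto simp: div_kernel_def)
  finally show ?thesis .
qed

fun mix_coeff :: "nat \<Rightarrow> (nat \<Rightarrow> nat) \<Rightarrow> (nat \<Rightarrow> nat) \<Rightarrow> nat \<Rightarrow> real" where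
  "mix_coeff 0 c a k = empty_coeff k / odd_r k^(2 * a 0)"
| "mix_coeff (Suc d) c a k =
     (\<Sum>l=1..k. div_kernel (c 1) k l * mix_coeff d (\<lambda>i. c (Suc i)) (\<lambda>i. a (Suc i)) l)
       / odd_r k^(2 * a 0)"

lemma mix_index_Suc:
  "mix_index (Suc d) c a
     = replicate (a 0) 2 @ c 1 # mix_index d (\<lambda>i. c (Suc i)) (\<lambda>i. a (Suc i))"
proof -
  have "[1..<Suc d + 1] = 1 # map Suc [1..<d + 1]"
    by (simp add: upt_conv_Cons map_Suc_upt del: upt_Suc)
  then show ?thesis
    unfolding mix_index_def by (simp add: comp_def)
qed

lemma tstar_mix_index:
  assumes "1 \<le> n" "\<forall>i\<in>{1..d}. 1 \<le> c i \<and> c i \<noteq> 2"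
  shows "tstar n (mix_index d c a) = kern_sum n (mix_coeff d c a)"
  using assms
proof (induction d arbitrary: n c a)
  case 0
  have "tstar m [] = kern_sum m empty_coeff" if "1 \<le> m" for m
    using kern_sum_empty_coeff[OF that] by simp
  from tstar_replicate_2_append[OF this 0(1)] show ?case
    by (simp add: mix_index_def)
next
  case (Suc d)
  have "tstar m (mix_index d (\<lambda>i. c (Suc i)) (\<lambda>i. a (Suc i)))
      = kern_sum m (mix_coeff d (\<lambda>i. c (Suc i)) (\<lambda>i. a (Suc i)))" if "1 \<le> m" for m
    using Suc.IH[OF that] Suc.prems(2) by auto
  from tstar_Cons_div_kernel[of "c 1", OF _ _ this] Suc.prems(2)
  have "tstar m (c 1 # mix_index d (\<lambda>i. c (Suc i)) (\<lambda>i. a (Suc i)))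
      = kern_sum m (\<lambda>j. \<Sum>l=1..j.
          div_kernel (c 1) j l * mix_coeff d (\<lambda>i. c (Suc i)) (\<lambda>i. a (Suc i)) l)"
    for m
    by auto
  from tstar_replicate_2_append[OF _ Suc.prems(1), OF this] show ?case
    by (simp add: mix_index_Suc)
qed

lemma chains_finite: "finite (chains n d)"
proof (rule finite_subset)
  show "chains n d \<subseteq> {xs. set xs \<subseteq> {1..n} \<and> length xs = d + 1}"
    by (auto simp: chains_def)
  show "finite {xs. set xs \<subseteq> {1..n} \<and> length xs = d + 1}"
    by (rule finite_lists_length_eq) simp
qed

lemma chains_0: "chains n 0 = (\<lambda>k. [k]) ` {1..n}"
  by (auto simp: chains_def length_Suc_conv)

lemma chains_Suc: "chains n (Suc d) = (\<lambda>(k, ks). k # ks) ` (SIGMA k:{1..n}. chains k d)"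
proof
  show "chains n (Suc d) \<subseteq> (\<lambda>(k, ks). k # ks) ` (SIGMA k:{1..n}. chains k d)"
  proof
    fix xs
    assume xs: "xs \<in> chains n (Suc d)"
    then obtain k ks where xs_eq: "xs = k # ks"
      by (cases xs) (auto simp: chains_def)
    with xs have "k \<in> {1..n}" "ks \<in> chains k d"
      by (auto simp: chains_def)
    with xs_eq show "xs \<in> (\<lambda>(k, ks). k # ks) ` (SIGMA k:{1..n}. chains k d)"
      by force
  qed
  show "(\<lambda>(k, ks). k # ks) ` (SIGMA k:{1..n}. chains k d) \<subseteq> chains n (Suc d)"
    by (auto simp: chains_def subset_iff)
qed

lemma sum_chains_Suc:
  "(\<Sum>ks\<in>chains n (Suc d). f ks) = (\<Sum>k=1..n. \<Sum>ks\<in>chains k d. f (k # ks))"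
proof -
  have "inj_on (\<lambda>(k, ks). k # ks) (SIGMA k:{1..n}. chains k d)"
    by (auto simp: inj_on_def)
  then have "(\<Sum>ks\<in>chains n (Suc d). f ks)
      = (\<Sum>(k, ks)\<in>(SIGMA k:{1..n}. chains k d). f (k # ks))"
    unfolding chains_Suc by (simp add: sum.reindex case_prod_unfold)
  also have "\<dots> = (\<Sum>k=1..n. \<Sum>ks\<in>chains k d. f (k # ks))"
    by (rule sum.Sigma[symmetric]) (auto simp: chains_finite)
  finally show ?thesis .
qed

lemma chains_head: "ks \<in> chains k d \<Longrightarrow> 1 \<le> ks ! 0 \<and> ks ! 0 \<le> k"
  by (cases ks) (auto simp: chains_def)

definition chain_term :: "nat \<Rightarrow> nat \<Rightarrow> nat \<Rightarrow> real \<Rightarrow> real" where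
  "chain_term a e k v = (-1) ^ (k * e) / odd_r k powi (2 * int a - int e + 3) * v"

definition chain_factor ::
    "nat \<Rightarrow> (nat \<Rightarrow> nat) \<Rightarrow> (nat \<Rightarrow> nat) \<Rightarrow> nat list \<Rightarrow> nat \<Rightarrow> real" where
  "chain_factor d c a ks i =
     chain_term (a i) (deltai d c i) (ks ! i)
       (Vsharp (if i = 0 then 0 else ks ! (i - 1)) (ks ! i) (replicate (cext d c i - 3) 1))"

lemma Vsharp_0_Nil: "1 \<le> k \<Longrightarrow> Vsharp 0 k [] = -2 / odd_r k"
  by (simp add: Vsharp_def tri_def odd_r_def)

text \<open>The first two factors of a chain with \<open>c\<^sub>1 = x\<close> merge into the kernel
  \<open>div_kernel x\<close> times the first factor of the chain with \<open>c\<^sub>1\<close> removed.\<close>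

lemma chain_term_head_pair:
  assumes l: "1 \<le> l" "l \<le> k" and x: "x = 1 \<or> 3 \<le> x"
  shows "chain_term p (delta 1 + delta x) k (Vsharp 0 k [])
           * chain_term q (delta x + e) l (Vsharp k l (replicate (x - 3) 1))
         = div_kernel x k l * chain_term q (delta 1 + e) l (Vsharp 0 l []) / odd_r k^(2 * p)"
proof -
  have k: "1 \<le> k"
    using l by simp
  have nz: "odd_r k \<noteq> 0" "odd_r l \<noteq> 0"
    using odd_r_nonzero k l by auto
  define Q where "Q = odd_r l powi (2 * int q - int e + 2)"
  have "Q \<noteq> 0"
    using nz by (simp add: Q_def)
  have e_1: "2 * int q - int (delta 1 + e) + 3 = 2 * int q - int e + 2"
    by (simp add: delta_def)
  from x show ?thesis
  proof
    assume x1: "x = 1"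
    have e_k: "2 * int p - int (delta 1 + delta 1) + 3 = int (2 * p + 1)"
      by (simp add: delta_def)
    have sign_k: "(-1::real) ^ (k * (delta 1 + delta 1)) = 1"
      using neg_one_power_mult_self[of k] by (simp add: delta_def mult_2_right power_add)
    have kernel: "div_kernel 1 k l = 2 ^ tri k l / odd_r k"
      using l by (simp add: div_kernel_def)
    have V: "Vsharp k l [] = (2 * (odd_r k / odd_r l)) ^ tri k l"
      by (simp add: Vsharp_def)
    have empty: "replicate (1 - 3) (1::nat) = []"
      by simp
    show ?thesis
      unfolding x1 chain_term_def empty e_k e_1 sign_k kernel V
        Vsharp_0_Nil[OF k] Vsharp_0_Nil[OF l(1)] Q_def[symmetric] power_int_of_nat
      using nz \<open>Q \<noteq> 0\<close> by (auto simp: tri_def field_simps power_add)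
  next
    assume x3: "3 \<le> x"
    then have dx: "delta x = 0"
      by (simp add: delta_def)
    have e_l: "odd_r l powi (2 * int q - int (delta x + e) + 3) = Q * odd_r l"
    proof -
      have exponent: "2 * int q - int (delta x + e) + 3 = (2 * int q - int e + 2) + 1"
        using dx by simp
      show ?thesis
        unfolding exponent Q_def by (rule power_int_add_1) (use nz in simp)
    qed
    have e_k: "2 * int p - int (delta 1 + delta x) + 3 = int (2 * p + 2)"
      using dx by (simp add: delta_def)
    have kernel: "div_kernel x k l = (-1)^k * (-1)^l / odd_r k^3 * Vsharp k l (replicate (x - 3) 1)"
      using x3 l by (simp add: div_kernel_def power_add)
    show ?thesis
      unfolding chain_term_def e_l e_k e_1 kernel Vsharp_0_Nil[OF k] Vsharp_0_Nil[OF l(1)]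
        Q_def[symmetric] power_int_of_nat
      using nz \<open>Q \<noteq> 0\<close> neg_one_power_mult_self[of l] dx
      by (simp add: delta_def field_simps power_add power3_eq_cube power2_eq_square)
  qed
qed

lemma deltai_Suc_shift: "1 \<le> i \<Longrightarrow> deltai (Suc d) c (Suc i) = deltai d (\<lambda>j. c (Suc j)) i"
  by (simp add: deltai_def cext_def)

lemma prod_chain_factor_Cons:
  assumes c: "c 1 = 1 \<or> 3 \<le> c 1" and ks: "ks \<in> chains k d"
  shows "prod (chain_factor (Suc d) c a (k # ks)) {0..Suc d}
     = div_kernel (c 1) k (ks ! 0) * prod (chain_factor d (\<lambda>i. c (Suc i)) (\<lambda>i. a (Suc i)) ks) {0..d}
       / odd_r k^(2 * a 0)"
proof -
  define c' where "c' = (\<lambda>i. c (Suc i))"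
  define a' where "a' = (\<lambda>i. a (Suc i))"
  define \<phi> where "\<phi> = chain_factor (Suc d) c a (k # ks)"
  define \<psi> where "\<psi> = chain_factor d c' a' ks"
  have tail: "prod (\<lambda>i. \<phi> (Suc i)) {1..d} = prod \<psi> {1..d}"
    by (intro prod.cong refl)
      (simp add: \<phi>_def \<psi>_def chain_factor_def deltai_Suc_shift c'_def a'_def cext_def)
  have head: "1 \<le> ks ! 0" "ks ! 0 \<le> k"
    using chains_head[OF ks] by auto
  have "prod \<phi> {0..Suc d} = (\<phi> 0 * \<phi> 1) * prod (\<lambda>i. \<phi> (Suc i)) {1..d}"
    by (simp add: prod.atLeast0_atMost_Suc_shift prod.atLeast_Suc_atMost del: prod.cl_ivl_Suc)
  also have "\<phi> 0 * \<phi> 1 = div_kernel (c 1) k (ks ! 0) * \<psi> 0 / odd_r k^(2 * a 0)"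
    using chain_term_head_pair[OF head c, of "a 0" "a 1" "delta (cext d c' 1)"]
    by (simp add: \<phi>_def \<psi>_def chain_factor_def deltai_def cext_def c'_def a'_def)
  also have "prod \<psi> {0..d} = \<psi> 0 * prod \<psi> {1..d}"
    by (simp add: prod.atLeast_Suc_atMost)
  ultimately show ?thesis
    unfolding tail \<phi>_def[symmetric] by (simp add: \<psi>_def c'_def a'_def)
qed

lemma sum_chains_prod_chain_factor:
  assumes "\<forall>i\<in>{1..d}. 1 \<le> c i \<and> c i \<noteq> 2"
  shows "(\<Sum>ks\<in>chains n d. w (ks ! 0) * prod (chain_factor d c a ks) {0..d})
           = (\<Sum>k=1..n. w k * mix_coeff d c a k)"
  using assms
proof (induction d arbitrary: n c a w)
  case 0
  have "chain_factor 0 c a [k] 0 = mix_coeff 0 c a k" if "1 \<le> k" for k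
  proof -
    have delta: "deltai 0 c 0 = 3"
      by (simp add: deltai_def cext_def delta_def)
    have exponent: "2 * int (a 0) - int 3 + 3 = int (2 * a 0)"
      by simp
    have "(-1::real) ^ (k * 3) = (-1)^k"
      by (simp add: power_mult mult.commute[of k])
    then show ?thesis
      unfolding chain_factor_def chain_term_def delta exponent power_int_of_nat
      using odd_r_nonzero[OF that]
      by (simp add: cext_def Vsharp_0_Nil[OF that] empty_coeff_def field_simps)
  qed
  then show ?case
    unfolding chains_0 by (simp add: sum.reindex inj_on_def)
next
  case (Suc d)
  have "1 \<le> c 1" "c 1 \<noteq> 2"
    using Suc.prems by auto
  then have c: "c 1 = 1 \<or> 3 \<le> c 1"
    by linarith
  have "(\<Sum>ks\<in>chains n (Suc d). w (ks ! 0) * prod (chain_factor (Suc d) c a ks) {0..Suc d})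
      = (\<Sum>k=1..n. w k / odd_r k^(2 * a 0) * (\<Sum>ks\<in>chains k d. div_kernel (c 1) k (ks ! 0)
           * prod (chain_factor d (\<lambda>i. c (Suc i)) (\<lambda>i. a (Suc i)) ks) {0..d}))"
    unfolding sum_chains_Suc sum_distrib_left
    by (intro sum.cong refl) (simp add: prod_chain_factor_Cons[of c, OF c] del: prod.cl_ivl_Suc)
  also have "\<dots> = (\<Sum>k=1..n. w k * mix_coeff (Suc d) c a k)"
    using Suc.IH[of "\<lambda>i. c (Suc i)"] Suc.prems by simp
  finally show ?case .
qed

theorem corollary2p4:
  fixes n d :: nat and c a :: "nat \<Rightarrow> nat"
  assumes "n \<ge> 1"
    and "\<forall>i\<in>{1..d}. c i \<ge> 1 \<and> c i \<noteq> 2"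
  shows "tstar n (mix_index d c a) =
    real n * real (2 * n choose n) / 2 ^ (4 * n - 2) *
    (\<Sum>ks\<in>chains n d.
       real (2 * n - 1 choose (n - ks ! 0)) *
       (\<Prod>i\<in>{0..d}.
          (-1) ^ (ks ! i * deltai d c i)
          / (odd_r (ks ! i) powi (2 * int (a i) - int (deltai d c i) + 3))
          * Vsharp (if i = 0 then 0 else ks ! (i - 1)) (ks ! i)
                   (replicate (cext d c i - 3) 1)))"
proof -
  have "tstar n (mix_index d c a) = kern_sum n (mix_coeff d c a)"
    using tstar_mix_index assms by simp
  also have "\<dots> = kern_scale n * (\<Sum>k=1..n. real (2 * n - 1 choose (n - k)) * mix_coeff d c a k)"
    unfolding kern_sum_def sum_distrib_left by (intro sum.cong refl) (auto simp: kern_def)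
  also have "(\<Sum>k=1..n. real (2 * n - 1 choose (n - k)) * mix_coeff d c a k)
      = (\<Sum>ks\<in>chains n d. real (2 * n - 1 choose (n - ks ! 0)) * prod (chain_factor d c a ks) {0..d})"
    using sum_chains_prod_chain_factor[where w = "\<lambda>k. real (2 * n - 1 choose (n - k))"] assms(2)
    by simp
  finally show ?thesis
    by (simp add: kern_scale_def chain_factor_def chain_term_def)
qed

end
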